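(* Let $C_1,\ldots,C_n\in\mathcal{C}^\infty(T^*\mathbb{R}^N)$ be symbols. Then, with $\star$ the Moyal product, $$C_1\star\cdots\star C_n=\sum_{k=0}^{\infty}\frac{1}{k!}\left(\frac{i\hbar}{2}\right)^k\sum_{\substack{\Gamma\text{ labeled graph with}\\ n\text{ vertices and }k\text{ edges}}}\lambda_\Gamma(C_1,\ldots,C_n).$$
   Context: Use coordinates $(z^1,\ldots,z^{2N})=(x_1,\ldots,x_N,p_1,\ldots,p_N)$ on $T^*\mathbb{R}^N$, and let $J^{\mu\nu}$ be the entries of the matrix $\begin{pmatrix}0&I_N\\-I_N&0\end{pmatrix}$. Write $C_{,\mu_1\ldots\mu_k}=\partial^kC/\partial z^{\mu_1}\cdots\partial z^{\mu_k}$ and use summation over repeated indices. $\hbar$ is a formal parameter. The Moyal product is $C\star D=\sum_{k\ge0}\frac1{k!}(\frac{i\hbar}{2})^k\{C,D\}_k$ with $\{C,D\}_0=CD$ and $\{C,D\}_k=C_{,\mu_1\ldots\mu_k}J^{\mu_1\nu_1}\cdots J^{\mu_k\nu_k}D_{,\nu_1\ldots\nu_k}$. A labeled graph with $V$ vertices and $E$ edges is a map $s:\{1,\ldots,E\}\to\mathcal{P}_2\{1,\ldots,V\}$ ($\mathcal P_2X$ = 2-element subsets of $X$); edge $e$ joins the vertices in $s(e)$ (multiple edges allowed, no self-edges). Each edge $e$ with $s(e)=\{i,j\}$, $i<j$, is oriented from its tail $i$ to its head $j$. Given symbols $C_1,\ldots,C_V$, $\lambda_\Gamma(C_1,\ldots,C_V)$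 is the function obtained by attaching to each edge $e$ a pair of indices $(\mu_e,\nu_e)$ and a factor $J^{\mu_e\nu_e}$, and to each vertex $v$ the function $C_v$ differentiated by $\partial_{z^{\mu_e}}$ for every edge $e$ with tail $v$ and by $\partial_{z^{\nu_e}}$ for every edge $e$ with head $v$; then multiplying all these factors and summing over all indices. (E.g. for the graph with one edge $1\to2$ and two edges $2\to3$: $\lambda=C_{1,\mu_1}J^{\mu_1\nu_1}C_{2,\nu_1\mu_2\mu_3}J^{\mu_2\nu_2}J^{\mu_3\nu_3}C_{3,\nu_2\nu_3}$.) *)

theory Defs
  imports "HOL-Analysis.Analysis" "HOL-Library.FuncSet"
begin

text \<open>Phase space T^*R^N = R^{2N}, coordinates indexed by 'n + 'n:
  Inl i is x_i, Inr i is p_i. Symbols are complex-valued functions.\<close>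

type_synonym 'n sym = "real ^ ('n + 'n) \<Rightarrow> complex"

fun Jm :: "('n + 'n) \<Rightarrow> ('n + 'n) \<Rightarrow> complex" where
  "Jm (Inl i) (Inr j) = (if i = j then 1 else 0)"
| "Jm (Inr i) (Inl j) = (if i = j then -1 else 0)"
| "Jm _ _ = 0"

definition pd :: "('n::finite + 'n) \<Rightarrow> 'n sym \<Rightarrow> 'n sym" where
  "pd mu f = (\<lambda>z. vector_derivative (\<lambda>t::real. f (z + t *\<^sub>R axis mu 1)) (at 0))"

definition pds :: "('n::finite + 'n) list \<Rightarrow> 'n sym \<Rightarrow> 'n sym" where
  "pds mus f = foldr pd mus f"

definition smooth_sym :: "'n::finite sym \<Rightarrow> bool" where
  "smooth_sym f \<longleftrightarrow> (\<forall>mus z. pds mus f differentiable (at z))"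

definition bracket :: "nat \<Rightarrow> 'n::finite sym \<Rightarrow> 'n sym \<Rightarrow> 'n sym" where
  "bracket k C D = (\<lambda>z. \<Sum>mu\<in>{1..k} \<rightarrow>\<^sub>E UNIV. \<Sum>nu\<in>{1..k} \<rightarrow>\<^sub>E UNIV.
      (\<Prod>e\<in>{1..k}. Jm (mu e) (nu e))
      * pds (map mu [1..<k+1]) C z * pds (map nu [1..<k+1]) D z)"

text \<open>Formal power series in hbar with symbol coefficients: A m is the coefficient of hbar^m.\<close>
type_synonym 'n hseries = "nat \<Rightarrow> 'n sym"

definition const_series :: "'n sym \<Rightarrow> 'n hseries" where
  "const_series C = (\<lambda>m. if m = 0 then C else (\<lambda>_. 0))"

text \<open>Moyal product extended hbar-bilinearly to formal series:
  A \<star> B = \<Sum>_k 1/k! (i hbar/2)^k {A,B}_k.\<close>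
definition moyal :: "'n::finite hseries \<Rightarrow> 'n hseries \<Rightarrow> 'n hseries" where
  "moyal A B = (\<lambda>m z. \<Sum>k\<le>m. \<Sum>a\<le>m - k.
      (\<i> / 2) ^ k / of_nat (fact k) * bracket k (A a) (B (m - k - a)) z)"

fun moyal_list :: "nat \<Rightarrow> (nat \<Rightarrow> 'n::finite sym) \<Rightarrow> 'n hseries" where
  "moyal_list 0 C = const_series (\<lambda>_. 1)"
| "moyal_list (Suc 0) C = const_series (C 1)"
| "moyal_list (Suc (Suc n)) C = moyal (moyal_list (Suc n) C) (const_series (C (Suc (Suc n))))"

definition graphs :: "nat \<Rightarrow> nat \<Rightarrow> (nat \<Rightarrow> nat set) set" where
  "graphs V E = {1..E} \<rightarrow>\<^sub>E {A. A \<subseteq> {1..V} \<and> card A = 2}"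

text \<open>Derivative indices at vertex v, in edge order: mu_e if v is the tail (min) of e,
  nu_e if v is the head (max) of e.\<close>
definition vertex_indices :: "nat \<Rightarrow> (nat \<Rightarrow> nat set) \<Rightarrow> (nat \<Rightarrow> 'a) \<Rightarrow> (nat \<Rightarrow> 'a) \<Rightarrow> nat \<Rightarrow> 'a list" where
  "vertex_indices E s mu nu v = concat (map (\<lambda>e.
      (if Min (s e) = v then [mu e] else []) @ (if Max (s e) = v then [nu e] else [])) [1..<E+1])"

definition lambda_graph :: "nat \<Rightarrow> nat \<Rightarrow> (nat \<Rightarrow> nat set) \<Rightarrow> (nat \<Rightarrow> 'n::finite sym) \<Rightarrow> 'n sym" where
  "lambda_graph V E s C = (\<lambda>z. \<Sum>mu\<in>{1..E} \<rightarrow>\<^sub>E UNIV. \<Sum>nu\<in>{1..E} \<rightarrow>\<^sub>E UNIV.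
      (\<Prod>e\<in>{1..E}. Jm (mu e) (nu e)) * (\<Prod>v\<in>{1..V}. pds (vertex_indices E s mu nu v) (C v) z))"

end

theory Submission
  imports Defs
begin

text \<open>Encode a labeled graph, together with the index pairs summed over in its term, as a
  list of labeled edges \<open>(P, \<mu>, \<nu>)\<close>. The order-\<open>K\<close> graph sum becomes a sum over such lists
  of a term that is invariant under permutations of the list, since partial derivatives of
  smooth functions commute. Induct on the number of factors, writing \<open>c k = (i/2)^k / k!\<close>.
  The order-\<open>K\<close> coefficient of \<open>(C 1 \<star> \<dots> \<star> C n) \<star> C (n+1)\<close> is the sum over \<open>k\<close> of
  \<open>c k * c (K - k)\<close> times the \<open>k\<close>-th bracket of the order-\<open>(K - k)\<close> graph sum on \<open>n\<close>
  vertices with \<open>C (n+1)\<close>. By the Leibniz rule, each of the \<open>k\<close> derivatives acting on the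
  product over the first \<open>n\<close> vertices chooses a vertex \<open>v\<close>, which creates an edge
  \<open>{v, n+1}\<close>; so the bracket is the sum over lists of \<open>K - k\<close> old edges followed by \<open>k\<close>
  edges into \<open>n+1\<close>. Finally \<open>c k * c (K - k) = c K * (K choose k)\<close>, and \<open>K choose k\<close> counts
  the interleavings of old and new edges in a list of \<open>K\<close> edges on \<open>n+1\<close> vertices.\<close>

section \<open>Partial derivatives of smooth symbols\<close>

lemma has_vector_derivative_along_line:
  fixes f :: "'a::real_normed_vector \<Rightarrow> 'b::real_normed_vector"
  assumes "(f has_derivative f') (at (w + s0 *\<^sub>R u))"
  shows "((\<lambda>s. f (w + s *\<^sub>R u)) has_vector_derivative f' u) (at s0)"
proof -
  have "((\<lambda>s. w + s *\<^sub>R u) has_derivative (\<lambda>s. s *\<^sub>R u)) (at s0)"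
    by (auto intro!: derivative_eq_intros)
  from has_derivative_compose[OF this assms]
  have "((\<lambda>s. f (w + s *\<^sub>R u)) has_derivative (\<lambda>s. f' (s *\<^sub>R u))) (at s0)" .
  moreover have "(\<lambda>s. f' (s *\<^sub>R u)) = (\<lambda>s. s *\<^sub>R f' u)"
    using assms has_derivative_linear linear_cmul by blast
  ultimately show ?thesis unfolding has_vector_derivative_def by simp
qed

lemma pd_eq_derivative:
  fixes f :: "'n::finite sym"
  assumes "(f has_derivative f') (at y)"
  shows "pd m f y = f' (axis m 1)"
proof -
  have "((\<lambda>s. f (y + s *\<^sub>R axis m 1)) has_vector_derivative f' (axis m 1)) (at 0)"
    by (rule has_vector_derivative_along_line) (use assms in simp)
  then show ?thesis unfolding pd_def by (rule vector_derivative_at)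
qed

lemma pd_add:
  fixes f g :: "'n::finite sym"
  assumes "f differentiable (at y)" "g differentiable (at y)"
  shows "pd m (\<lambda>z. f z + g z) y = pd m f y + pd m g y"
proof -
  obtain f' g' where f: "(f has_derivative f') (at y)" and g: "(g has_derivative g') (at y)"
    using assms unfolding differentiable_def by blast
  show ?thesis using pd_eq_derivative[OF f] pd_eq_derivative[OF g]
      pd_eq_derivative[OF has_derivative_add[OF f g]] by simp
qed

lemma pd_mult:
  fixes f g :: "'n::finite sym"
  assumes "f differentiable (at y)" "g differentiable (at y)"
  shows "pd m (\<lambda>z. f z * g z) y = pd m f y * g y + f y * pd m g y"
proof -
  obtain f' g' where f: "(f has_derivative f') (at y)" and g: "(g has_derivative g') (at y)"
    using assms unfolding differentiable_def by blast
  show ?thesis using pd_eq_derivative[OF f] pd_eq_derivative[OF g]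
      pd_eq_derivative[OF has_derivative_mult[OF f g]] by simp
qed

lemma pd_const [simp]: "pd m (\<lambda>z. c) = (\<lambda>z. 0)"
  unfolding pd_def by simp

lemma pd_cmult: "f differentiable (at y) \<Longrightarrow> pd m (\<lambda>z. c * f z) y = c * pd m f y"
  using pd_mult[of "\<lambda>z. c" y f m] by simp

lemma pd_prod:
  fixes F :: "'v \<Rightarrow> 'n::finite sym"
  assumes "finite V" and "\<And>v. v \<in> V \<Longrightarrow> F v differentiable (at y)"
  shows "pd m (\<lambda>z. \<Prod>v\<in>V. F v z) y
    = (\<Sum>w\<in>V. \<Prod>v\<in>V. if v = w then pd m (F v) y else F v y)"
proof -
  obtain F' where F': "\<And>v. v \<in> V \<Longrightarrow> (F v has_derivative F' v) (at y)"
    using assms(2) unfolding differentiable_def by metis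
  have "pd m (\<lambda>z. \<Prod>v\<in>V. F v z) y = (\<Sum>w\<in>V. F' w (axis m 1) * (\<Prod>v\<in>V - {w}. F v y))"
    using F' by (intro pd_eq_derivative has_derivative_prod)
  also have "\<dots> = (\<Sum>w\<in>V. \<Prod>v\<in>V. if v = w then pd m (F v) y else F v y)"
  proof (intro sum.cong refl)
    fix w assume w: "w \<in> V"
    have "F' w (axis m 1) * (\<Prod>v\<in>V - {w}. F v y)
        = pd m (F w) y * (\<Prod>v\<in>V - {w}. if v = w then pd m (F v) y else F v y)"
      by (simp add: pd_eq_derivative[OF F'[OF w]] cong: prod.cong_simp)
    also have "\<dots> = (\<Prod>v\<in>V. if v = w then pd m (F v) y else F v y)"
      using assms(1) w by (subst prod.remove[of V w]) auto
    finally show "F' w (axis m 1) * (\<Prod>v\<in>V - {w}. F v y) = \<dots>" .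
  qed
  finally show ?thesis .
qed

lemma pds_Nil [simp]: "pds [] f = f"
  unfolding pds_def by simp

lemma pds_Cons [simp]: "pds (m # l) f = pd m (pds l f)"
  unfolding pds_def by simp

lemma pds_append: "pds (l @ l') f = pds l (pds l' f)"
  unfolding pds_def by simp

lemma pds_zero [simp]: "pds l (\<lambda>z. 0) = (\<lambda>z. 0)"
  by (induction l) simp_all

lemma smooth_sym_differentiable: "smooth_sym f \<Longrightarrow> f differentiable (at z)"
  unfolding smooth_sym_def by (metis pds_Nil)

lemma smooth_sym_pds: "smooth_sym f \<Longrightarrow> smooth_sym (pds l f)"
  unfolding smooth_sym_def by (metis pds_append)

lemma smooth_sym_pd: "smooth_sym f \<Longrightarrow> smooth_sym (pd m f)"
  using smooth_sym_pds[of f "[m]"] by simp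

text \<open>The closure is a device: it is stable under \<^const>\<open>pd\<close>, hence consists of smooth
  symbols, which shows that smooth symbols are closed under sums and products.\<close>

inductive smooth_closure :: "'n::finite sym \<Rightarrow> bool" where
  smooth: "smooth_sym f \<Longrightarrow> smooth_closure f"
| const: "smooth_closure (\<lambda>z. c)"
| add: "smooth_closure f \<Longrightarrow> smooth_closure g \<Longrightarrow> smooth_closure (\<lambda>z. f z + g z)"
| mult: "smooth_closure f \<Longrightarrow> smooth_closure g \<Longrightarrow> smooth_closure (\<lambda>z. f z * g z)"

lemma smooth_closure_differentiable: "smooth_closure f \<Longrightarrow> f differentiable (at z)"
  by (induction rule: smooth_closure.induct) (auto simp: smooth_sym_differentiable)

lemma smooth_closure_pd: "smooth_closure f \<Longrightarrow> smooth_closure (pd m f)"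
proof (induction rule: smooth_closure.induct)
  case (smooth f)
  then show ?case by (simp add: smooth_sym_pd smooth_closure.smooth)
next
  case const
  then show ?case by (simp add: smooth_closure.const)
next
  case (add f g)
  have "pd m (\<lambda>z. f z + g z) = (\<lambda>z. pd m f z + pd m g z)"
    using add.hyps by (simp add: fun_eq_iff pd_add smooth_closure_differentiable)
  then show ?case using add.IH by (simp add: smooth_closure.add)
next
  case (mult f g)
  have "pd m (\<lambda>z. f z * g z) = (\<lambda>z. pd m f z * g z + f z * pd m g z)"
    using mult.hyps by (simp add: fun_eq_iff pd_mult smooth_closure_differentiable)
  then show ?case using mult by (simp add: smooth_closure.add smooth_closure.mult)
qed

lemma smooth_closure_eq_smooth_sym: "smooth_closure f \<longleftrightarrow> smooth_sym f"
proof
  assume "smooth_closure f"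
  then have "smooth_closure (pds l f)" for l
    by (induction l) (simp_all add: smooth_closure_pd)
  then show "smooth_sym f"
    unfolding smooth_sym_def using smooth_closure_differentiable by blast
qed (rule smooth_closure.smooth)

lemma smooth_sym_const: "smooth_sym (\<lambda>z. c)"
  using smooth_closure.const smooth_closure_eq_smooth_sym by blast

lemma smooth_sym_add: "smooth_sym f \<Longrightarrow> smooth_sym g \<Longrightarrow> smooth_sym (\<lambda>z. f z + g z)"
  using smooth_closure.add smooth_closure_eq_smooth_sym by blast

lemma smooth_sym_mult: "smooth_sym f \<Longrightarrow> smooth_sym g \<Longrightarrow> smooth_sym (\<lambda>z. f z * g z)"
  using smooth_closure.mult smooth_closure_eq_smooth_sym by blast

lemma smooth_sym_sum:
  "finite I \<Longrightarrow> (\<And>i. i \<in> I \<Longrightarrow> smooth_sym (F i)) \<Longrightarrow> smooth_sym (\<lambda>z. \<Sum>i\<in>I. F i z)"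
  by (induction I rule: finite_induct) (simp_all add: smooth_sym_const smooth_sym_add)

lemma smooth_sym_prod:
  "finite I \<Longrightarrow> (\<And>i. i \<in> I \<Longrightarrow> smooth_sym (F i)) \<Longrightarrow> smooth_sym (\<lambda>z. \<Prod>i\<in>I. F i z)"
  by (induction I rule: finite_induct) (simp_all add: smooth_sym_const smooth_sym_mult)

lemma pds_add:
  "smooth_sym f \<Longrightarrow> smooth_sym g \<Longrightarrow> pds l (\<lambda>z. f z + g z) = (\<lambda>z. pds l f z + pds l g z)"
  by (induction l) (auto intro!: ext pd_add smooth_sym_differentiable smooth_sym_pds)

lemma pds_cmult: "smooth_sym f \<Longrightarrow> pds l (\<lambda>z. c * f z) = (\<lambda>z. c * pds l f z)"
  by (induction l) (auto intro!: ext pd_cmult smooth_sym_differentiable smooth_sym_pds)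

lemma pds_sum:
  "finite I \<Longrightarrow> (\<And>i. i \<in> I \<Longrightarrow> smooth_sym (F i)) \<Longrightarrow>
    pds l (\<lambda>z. \<Sum>i\<in>I. F i z) = (\<lambda>z. \<Sum>i\<in>I. pds l (F i) z)"
  by (induction I rule: finite_induct) (simp_all add: pds_add smooth_sym_sum)

section \<open>Symmetry of second derivatives\<close>

text \<open>The functional \<open>L\<close> below will be \<^const>\<open>Re\<close> or \<^const>\<open>Im\<close>; it makes
  the functions real-valued, so that the mean value theorem applies.\<close>

lemma has_real_derivative_along_axis:
  fixes g :: "'n::finite sym" and L :: "complex \<Rightarrow> real"
  assumes "g differentiable (at (w + s *\<^sub>R axis m 1))" and "bounded_linear L"
  shows "((\<lambda>s. L (g (w + s *\<^sub>R axis m 1))) has_real_derivative L (pd m g (w + s *\<^sub>R axis m 1))) (at s)"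
proof -
  obtain g' where g': "(g has_derivative g') (at (w + s *\<^sub>R axis m 1))"
    using assms(1) unfolding differentiable_def by blast
  have "((\<lambda>s. g (w + s *\<^sub>R axis m 1)) has_vector_derivative g' (axis m 1)) (at s)"
    by (rule has_vector_derivative_along_line[OF g'])
  then have "((\<lambda>s. L (g (w + s *\<^sub>R axis m 1))) has_vector_derivative L (g' (axis m 1))) (at s)"
    by (rule bounded_linear.has_vector_derivative[OF assms(2)])
  then show ?thesis
    by (simp add: pd_eq_derivative[OF g'] has_real_derivative_iff_has_vector_derivative)
qed

lemma second_difference_mvt:
  fixes f :: "'n::finite sym" and L :: "complex \<Rightarrow> real"
  assumes f: "smooth_sym f" and L: "bounded_linear L" and t: "0 < t"
  obtains \<sigma> \<tau> where "0 < \<sigma>" "\<sigma> < t" "0 < \<tau>" "\<tau> < t"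
    "L (f (z + t *\<^sub>R axis a 1 + t *\<^sub>R axis b 1)) - L (f (z + t *\<^sub>R axis a 1))
      - L (f (z + t *\<^sub>R axis b 1)) + L (f z)
    = t * t * L (pd b (pd a f) (z + \<sigma> *\<^sub>R axis a 1 + \<tau> *\<^sub>R axis b 1))"
proof -
  define ua :: "real ^ ('n + 'n)" where "ua = axis a 1"
  define ub :: "real ^ ('n + 'n)" where "ub = axis b 1"
  define \<phi> where "\<phi> s = L (f ((z + t *\<^sub>R ub) + s *\<^sub>R ua)) - L (f (z + s *\<^sub>R ua))" for s
  have "(\<phi> has_real_derivative
      L (pd a f ((z + t *\<^sub>R ub) + s *\<^sub>R ua)) - L (pd a f (z + s *\<^sub>R ua))) (at s)" for s
    unfolding \<phi>_def ua_def
    by (intro DERIV_diff has_real_derivative_along_axis L smooth_sym_differentiable f)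
  from MVT2[OF t this] obtain \<sigma> where \<sigma>: "0 < \<sigma>" "\<sigma> < t"
    and \<phi>_diff: "\<phi> t - \<phi> 0 = t * (L (pd a f ((z + t *\<^sub>R ub) + \<sigma> *\<^sub>R ua)) - L (pd a f (z + \<sigma> *\<^sub>R ua)))"
    by auto
  define \<psi> where "\<psi> s = L (pd a f ((z + \<sigma> *\<^sub>R ua) + s *\<^sub>R ub))" for s
  have "(\<psi> has_real_derivative L (pd b (pd a f) ((z + \<sigma> *\<^sub>R ua) + s *\<^sub>R ub))) (at s)" for s
    unfolding \<psi>_def ub_def
    by (intro has_real_derivative_along_axis L smooth_sym_differentiable smooth_sym_pd f)
  from MVT2[OF t this] obtain \<tau> where \<tau>: "0 < \<tau>" "\<tau> < t"
    and \<psi>_diff: "\<psi> t - \<psi> 0 = t * L (pd b (pd a f) ((z + \<sigma> *\<^sub>R ua) + \<tau> *\<^sub>R ub))"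
    by auto
  have "\<psi> t = L (pd a f ((z + t *\<^sub>R ub) + \<sigma> *\<^sub>R ua))" "\<psi> 0 = L (pd a f (z + \<sigma> *\<^sub>R ua))"
    unfolding \<psi>_def by (simp_all add: algebra_simps)
  with \<phi>_diff \<psi>_diff have "\<phi> t - \<phi> 0 = t * t * L (pd b (pd a f) (z + \<sigma> *\<^sub>R ua + \<tau> *\<^sub>R ub))"
    by simp
  moreover have "\<phi> t - \<phi> 0 = L (f (z + t *\<^sub>R ua + t *\<^sub>R ub)) - L (f (z + t *\<^sub>R ua))
      - L (f (z + t *\<^sub>R ub)) + L (f z)"
    unfolding \<phi>_def by (simp add: algebra_simps)
  ultimately show ?thesis using that \<sigma> \<tau> unfolding ua_def ub_def by metis
qed

lemma continuous_at_eq_if_values_meet: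
  fixes X Y :: "'a::metric_space \<Rightarrow> 'b::metric_space"
  assumes "isCont X z" "isCont Y z"
    and meet: "\<And>d. d > 0 \<Longrightarrow> \<exists>p q. dist p z < d \<and> dist q z < d \<and> X p = Y q"
  shows "X z = Y z"
proof (rule ccontr)
  assume "X z \<noteq> Y z"
  then have e: "dist (X z) (Y z) / 2 > 0" by simp
  obtain d1 where d1: "d1 > 0" "\<And>p. dist p z < d1 \<Longrightarrow> dist (X p) (X z) < dist (X z) (Y z) / 2"
    using assms(1) e unfolding continuous_at_eps_delta by blast
  obtain d2 where d2: "d2 > 0" "\<And>q. dist q z < d2 \<Longrightarrow> dist (Y q) (Y z) < dist (X z) (Y z) / 2"
    using assms(2) e unfolding continuous_at_eps_delta by blast
  obtain p q where "dist p z < min d1 d2" "dist q z < min d1 d2" "X p = Y q"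
    using meet[of "min d1 d2"] d1(1) d2(1) by auto
  then have "dist (X z) (X p) + dist (X p) (Y z) < dist (X z) (Y z)"
    using d1(2)[of p] d2(2)[of q] by (simp add: dist_commute)
  then show False using dist_triangle[of "X z" "Y z" "X p"] by linarith
qed

lemma pd_commute_bounded_linear:
  fixes f :: "'n::finite sym" and L :: "complex \<Rightarrow> real"
  assumes f: "smooth_sym f" and L: "bounded_linear L"
  shows "L (pd b (pd a f) z) = L (pd a (pd b f) z)"
proof (rule continuous_at_eq_if_values_meet[where X = "\<lambda>w. L (pd b (pd a f) w)"
      and Y = "\<lambda>w. L (pd a (pd b f) w)"])
  show "isCont (\<lambda>w. L (pd b (pd a f) w)) z" "isCont (\<lambda>w. L (pd a (pd b f) w)) z"
    by (intro bounded_linear.isCont[OF L] differentiable_imp_continuous_within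
          smooth_sym_differentiable smooth_sym_pd f)+
next
  fix d :: real assume "d > 0"
  define t where "t = d / 2"
  have t: "t > 0" using \<open>d > 0\<close> unfolding t_def by simp
  have near: "dist (z + p *\<^sub>R axis c 1 + q *\<^sub>R axis c' 1) z < d"
    if "0 < p" "p < t" "0 < q" "q < t" for p q :: real and c c' :: "'n + 'n"
  proof -
    have "dist (z + p *\<^sub>R axis c 1 + q *\<^sub>R axis c' 1) z
        \<le> norm (p *\<^sub>R axis c (1::real)) + norm (q *\<^sub>R axis c' (1::real))"
      unfolding dist_norm by (simp del: norm_scaleR add: norm_triangle_ineq)
    then show ?thesis using that unfolding t_def by simp
  qed
  have swap: "z + t *\<^sub>R axis b 1 + t *\<^sub>R axis a 1 = z + t *\<^sub>R axis a 1 + t *\<^sub>R axis b 1"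
    by (simp add: algebra_simps)
  \<comment> \<open>the same second difference, expanded in both orders\<close>
  obtain \<sigma> \<tau> where st: "0 < \<sigma>" "\<sigma> < t" "0 < \<tau>" "\<tau> < t" and
    ab: "L (f (z + t *\<^sub>R axis a 1 + t *\<^sub>R axis b 1)) - L (f (z + t *\<^sub>R axis a 1))
      - L (f (z + t *\<^sub>R axis b 1)) + L (f z)
    = t * t * L (pd b (pd a f) (z + \<sigma> *\<^sub>R axis a 1 + \<tau> *\<^sub>R axis b 1))"
    using second_difference_mvt[OF f L t] .
  obtain \<sigma>' \<tau>' where st': "0 < \<sigma>'" "\<sigma>' < t" "0 < \<tau>'" "\<tau>' < t" and
    ba: "L (f (z + t *\<^sub>R axis a 1 + t *\<^sub>R axis b 1)) - L (f (z + t *\<^sub>R axis b 1))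
      - L (f (z + t *\<^sub>R axis a 1)) + L (f z)
    = t * t * L (pd a (pd b f) (z + \<sigma>' *\<^sub>R axis b 1 + \<tau>' *\<^sub>R axis a 1))"
    using second_difference_mvt[OF f L t, of z b a] unfolding swap .
  from ab ba have "t * t * L (pd b (pd a f) (z + \<sigma> *\<^sub>R axis a 1 + \<tau> *\<^sub>R axis b 1))
      = t * t * L (pd a (pd b f) (z + \<sigma>' *\<^sub>R axis b 1 + \<tau>' *\<^sub>R axis a 1))"
    by linarith
  with t have "L (pd b (pd a f) (z + \<sigma> *\<^sub>R axis a 1 + \<tau> *\<^sub>R axis b 1))
      = L (pd a (pd b f) (z + \<sigma>' *\<^sub>R axis b 1 + \<tau>' *\<^sub>R axis a 1))"
    by simp
  then show "\<exists>p q. dist p z < d \<and> dist q z < d \<and> L (pd b (pd a f) p) = L (pd a (pd b f) q)"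
    using near[OF st] near[OF st'] by blast
qed

lemma pd_commute:
  assumes "smooth_sym f"
  shows "pd b (pd a f) = pd a (pd b f)"
proof
  fix z
  show "pd b (pd a f) z = pd a (pd b f) z"
    using pd_commute_bounded_linear[OF assms bounded_linear_Re, of b a z]
      pd_commute_bounded_linear[OF assms bounded_linear_Im, of b a z]
    by (simp add: complex_eq_iff)
qed

lemma pds_pd_commute: "smooth_sym f \<Longrightarrow> pds l (pd m f) = pd m (pds l f)"
  by (induction l) (simp_all add: pd_commute smooth_sym_pds)

lemma pds_perm: "smooth_sym f \<Longrightarrow> mset l = mset l' \<Longrightarrow> pds l f = pds l' f"
proof (induction l arbitrary: l')
  case Nil
  then show ?case by simp
next
  case (Cons m l)
  then obtain l1 l2 where l': "l' = l1 @ m # l2"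
    by (metis list.set_intros(1) set_mset_mset split_list)
  have "pds l' f = pd m (pds l1 (pds l2 f))"
    using Cons.prems by (simp add: l' pds_append pds_pd_commute smooth_sym_pds)
  also have "pds l1 (pds l2 f) = pds l f"
    using Cons.IH[of "l1 @ l2"] Cons.prems l' by (simp add: pds_append)
  finally show ?case by simp
qed

section \<open>Sums over lists\<close>

definition lists_of :: "'a set \<Rightarrow> nat \<Rightarrow> 'a list set" where
  "lists_of A K = {xs. length xs = K \<and> set xs \<subseteq> A}"

lemma lists_of_0 [simp]: "lists_of A 0 = {[]}"
  unfolding lists_of_def by auto

lemma lists_of_Suc: "lists_of A (Suc K) = (\<lambda>(a, xs). a # xs) ` (A \<times> lists_of A K)"
  unfolding lists_of_def by (auto simp: length_Suc_conv image_iff)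

lemma finite_lists_of: "finite A \<Longrightarrow> finite (lists_of A K)"
  unfolding lists_of_def using finite_lists_length_eq[of A K] by (simp add: conj_commute)

lemma prod_atLeastAtMost_eq_prod_list: "(\<Prod>e\<in>{1..K}. f e) = prod_list (map f [1..<K+1])"
  by (simp add: prod.distinct_set_conv_list[symmetric] atLeastLessThanSuc_atLeastAtMost del: upt_Suc)

lemma sum_lists_of_Suc:
  "(\<Sum>xs\<in>lists_of A (Suc K). F xs) = (\<Sum>a\<in>A. \<Sum>xs\<in>lists_of A K. F (a # xs))"
proof -
  have "inj_on (\<lambda>(a, xs). a # xs) (A \<times> lists_of A K)"
    by (auto simp: inj_on_def)
  then show ?thesis
    unfolding lists_of_Suc by (simp add: sum.reindex sum.cartesian_product split_def)
qed

lemma sum_lists_of_zip: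
  "(\<Sum>xs\<in>lists_of A K. \<Sum>ys\<in>lists_of B K. F (zip xs ys)) = (\<Sum>ps\<in>lists_of (A \<times> B) K. F ps)"
proof (induction K arbitrary: F)
  case (Suc K)
  have "(\<Sum>xs\<in>lists_of A (Suc K). \<Sum>ys\<in>lists_of B (Suc K). F (zip xs ys))
      = (\<Sum>a\<in>A. \<Sum>xs\<in>lists_of A K. \<Sum>b\<in>B. \<Sum>ys\<in>lists_of B K. F ((a, b) # zip xs ys))"
    by (simp add: sum_lists_of_Suc)
  also have "\<dots> = (\<Sum>a\<in>A. \<Sum>b\<in>B. \<Sum>xs\<in>lists_of A K. \<Sum>ys\<in>lists_of B K. F ((a, b) # zip xs ys))"
    by (rule sum.cong[OF refl], rule sum.swap)
  also have "\<dots> = (\<Sum>a\<in>A. \<Sum>b\<in>B. \<Sum>ps\<in>lists_of (A \<times> B) K. F ((a, b) # ps))"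
    by (intro sum.cong refl Suc.IH[of "\<lambda>ps. F ((_, _) # ps)"])
  also have "\<dots> = (\<Sum>p\<in>A \<times> B. \<Sum>ps\<in>lists_of (A \<times> B) K. F (p # ps))"
    by (rule sum.cartesian_product'[symmetric])
  also have "\<dots> = (\<Sum>ps\<in>lists_of (A \<times> B) (Suc K). F ps)"
    by (simp add: sum_lists_of_Suc)
  finally show ?case .
qed simp


lemma sum_lists_of_reindex_bij:
  assumes "bij_betw h A B"
  shows "(\<Sum>ys\<in>lists_of B K. F ys) = (\<Sum>xs\<in>lists_of A K. F (map h xs))"
proof (induction K arbitrary: F)
  case (Suc K)
  have "(\<Sum>ys\<in>lists_of B (Suc K). F ys) = (\<Sum>b\<in>B. \<Sum>xs\<in>lists_of A K. F (b # map h xs))"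
    by (simp add: sum_lists_of_Suc Suc.IH)
  also have "\<dots> = (\<Sum>a\<in>A. \<Sum>xs\<in>lists_of A K. F (h a # map h xs))"
    by (rule sum.reindex_bij_betw[OF assms, symmetric])
  finally show ?case by (simp add: sum_lists_of_Suc)
qed simp

lemma bij_betw_PiE_lists_of:
  "bij_betw (\<lambda>f. map f [1..<K+1]) ({1..K} \<rightarrow>\<^sub>E A) (lists_of A K)"
proof (rule bij_betwI')
  fix f g assume f: "f \<in> {1..K} \<rightarrow>\<^sub>E A" and g: "g \<in> {1..K} \<rightarrow>\<^sub>E A"
  show "(map f [1..<K+1] = map g [1..<K+1]) = (f = g)"
  proof
    assume "map f [1..<K+1] = map g [1..<K+1]"
    then have "\<forall>i\<in>set [1..<K+1]. f i = g i" by (simp only: map_eq_conv)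
    then show "f = g" using f g by (intro PiE_ext) auto
  qed simp
next
  fix f assume "f \<in> {1..K} \<rightarrow>\<^sub>E A"
  then show "map f [1..<K+1] \<in> lists_of A K" unfolding lists_of_def by auto
next
  fix xs assume xs: "xs \<in> lists_of A K"
  define f where "f = restrict (\<lambda>e. xs ! (e - 1)) {1..K}"
  have "f \<in> {1..K} \<rightarrow>\<^sub>E A"
    using xs unfolding f_def lists_of_def by (auto intro!: nth_mem[THEN subsetD[rotated]])
  moreover have "xs = map f [1..<K+1]"
    using xs unfolding f_def lists_of_def
    by (intro nth_equalityI) (auto simp del: upt_Suc simp add: nth_map_upt)
  ultimately show "\<exists>f\<in>{1..K} \<rightarrow>\<^sub>E A. xs = map f [1..<K+1]" by blast
qed

lemma sum_PiE_eq_sum_lists_of: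
  "(\<Sum>f\<in>{1..K} \<rightarrow>\<^sub>E A. F (map f [1..<K+1])) = (\<Sum>xs\<in>lists_of A K. F xs)"
  by (rule sum.reindex_bij_betw[OF bij_betw_PiE_lists_of])

lemma sum_PiE_PiE_eq_sum_lists_of:
  "(\<Sum>mu\<in>{1..K} \<rightarrow>\<^sub>E A. \<Sum>nu\<in>{1..K} \<rightarrow>\<^sub>E B. F (map (\<lambda>e. (mu e, nu e)) [1..<K+1]))
   = (\<Sum>ps\<in>lists_of (A \<times> B) K. F ps)"
proof -
  have pairs_as_zip: "map (\<lambda>e. (mu e, nu e)) [1..<K+1] = zip (map mu [1..<K+1]) (map nu [1..<K+1])"
    for mu nu :: "nat \<Rightarrow> _"
    by (simp add: zip_map_map zip_same_conv_map)
  have "(\<Sum>mu\<in>{1..K} \<rightarrow>\<^sub>E A. \<Sum>nu\<in>{1..K} \<rightarrow>\<^sub>E B. F (map (\<lambda>e. (mu e, nu e)) [1..<K+1]))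
      = (\<Sum>mu\<in>{1..K} \<rightarrow>\<^sub>E A. \<Sum>ys\<in>lists_of B K. F (zip (map mu [1..<K+1]) ys))"
    unfolding pairs_as_zip
    by (simp only: sum_PiE_eq_sum_lists_of[where F = "\<lambda>ys. F (zip (map mu [1..<K+1]) ys)" for mu])
  also have "\<dots> = (\<Sum>xs\<in>lists_of A K. \<Sum>ys\<in>lists_of B K. F (zip xs ys))"
    by (rule sum_PiE_eq_sum_lists_of)
  finally show ?thesis by (simp only: sum_lists_of_zip)
qed

lemma sum_binomial_Suc:
  fixes S :: "nat \<Rightarrow> nat \<Rightarrow> 'a::comm_ring_1"
  shows "(\<Sum>k\<le>Suc K. of_nat (Suc K choose k) * S (Suc K - k) k)
    = (\<Sum>k\<le>K. of_nat (K choose k) * (S (Suc K - k) k + S (K - k) (Suc k)))"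
proof -
  have shift: "(\<Sum>k\<le>Suc K. of_nat (Suc K choose k) * S (Suc K - k) k)
      = S (Suc K) 0 + (\<Sum>k\<le>K. of_nat (K choose k) * S (K - k) (Suc k))
        + (\<Sum>k\<le>K. of_nat (K choose Suc k) * S (K - k) (Suc k))"
    unfolding sum.atMost_Suc_shift by (simp add: distrib_right sum.distrib del: sum.atMost_Suc)
  have "(\<Sum>k\<le>K. of_nat (K choose k) * S (Suc K - k) k)
      = (\<Sum>k\<le>Suc K. of_nat (K choose k) * S (Suc K - k) k)"
    by (simp add: binomial_eq_0)
  also have "\<dots> = S (Suc K) 0 + (\<Sum>k\<le>K. of_nat (K choose Suc k) * S (K - k) (Suc k))"
    unfolding sum.atMost_Suc_shift by (simp del: sum.atMost_Suc)
  finally show ?thesis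
    unfolding shift by (simp add: distrib_left sum.distrib ac_simps)
qed

lemma sum_lists_of_Un_binomial:
  fixes T :: "'b list \<Rightarrow> 'a::comm_ring_1"
  assumes "finite B" "finite D" "B \<inter> D = {}"
    and perm: "\<And>xs ys. mset xs = mset ys \<Longrightarrow> T xs = T ys"
  shows "(\<Sum>xs\<in>lists_of (B \<union> D) K. T xs)
    = (\<Sum>k\<le>K. of_nat (K choose k) * (\<Sum>ys\<in>lists_of B (K - k). \<Sum>ws\<in>lists_of D k. T (ys @ ws)))"
  using perm
proof (induction K arbitrary: T)
  case 0
  show ?case by simp
next
  case (Suc K)
  define S where "S p q = (\<Sum>ys\<in>lists_of B p. \<Sum>ws\<in>lists_of D q. T (ys @ ws))" for p q
  have IH: "(\<Sum>xs\<in>lists_of (B \<union> D) K. T (a # xs))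
     = (\<Sum>k\<le>K. of_nat (K choose k) * (\<Sum>ys\<in>lists_of B (K - k). \<Sum>ws\<in>lists_of D k. T (a # ys @ ws)))"
    for a
    by (rule Suc.IH) (rule Suc.prems, simp)
  have from_B: "(\<Sum>a\<in>B. \<Sum>xs\<in>lists_of (B \<union> D) K. T (a # xs))
      = (\<Sum>k\<le>K. of_nat (K choose k) * S (Suc K - k) k)"
  proof -
    have "(\<Sum>a\<in>B. \<Sum>ys\<in>lists_of B (K - k). \<Sum>ws\<in>lists_of D k. T (a # ys @ ws)) = S (Suc K - k) k"
      if "k \<le> K" for k
      using that by (simp add: S_def Suc_diff_le sum_lists_of_Suc)
    then show ?thesis
      unfolding IH by (subst sum.swap) (auto simp: sum_distrib_left[symmetric] intro!: sum.cong)
  qed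
  have from_D: "(\<Sum>a\<in>D. \<Sum>xs\<in>lists_of (B \<union> D) K. T (a # xs))
      = (\<Sum>k\<le>K. of_nat (K choose k) * S (K - k) (Suc k))"
  proof -
    have "(\<Sum>a\<in>D. \<Sum>ys\<in>lists_of B (K - k). \<Sum>ws\<in>lists_of D k. T (a # ys @ ws))
        = (\<Sum>ys\<in>lists_of B (K - k). \<Sum>a\<in>D. \<Sum>ws\<in>lists_of D k. T (ys @ a # ws))" for k
      by (subst sum.swap) (intro sum.cong refl Suc.prems, simp)
    then have "(\<Sum>a\<in>D. \<Sum>ys\<in>lists_of B (K - k). \<Sum>ws\<in>lists_of D k. T (a # ys @ ws))
        = S (K - k) (Suc k)" for k
      by (simp add: S_def sum_lists_of_Suc)
    then show ?thesis
      unfolding IH by (subst sum.swap) (auto simp: sum_distrib_left[symmetric] intro!: sum.cong)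
  qed
  have "(\<Sum>xs\<in>lists_of (B \<union> D) (Suc K). T xs)
      = (\<Sum>a\<in>B. \<Sum>xs\<in>lists_of (B \<union> D) K. T (a # xs)) + (\<Sum>a\<in>D. \<Sum>xs\<in>lists_of (B \<union> D) K. T (a # xs))"
    unfolding sum_lists_of_Suc using assms(1-3) by (rule sum.union_disjoint)
  also have "\<dots> = (\<Sum>k\<le>K. of_nat (K choose k) * (S (Suc K - k) k + S (K - k) (Suc k)))"
    unfolding from_B from_D by (simp only: distrib_left sum.distrib)
  also have "\<dots> = (\<Sum>k\<le>Suc K. of_nat (Suc K choose k) * S (Suc K - k) k)"
    by (rule sum_binomial_Suc[symmetric])
  finally show ?case unfolding S_def .
qed

definition entries_at :: "'v \<Rightarrow> 'm list \<Rightarrow> 'v list \<Rightarrow> 'm list" where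
  "entries_at v l g = map fst (filter (\<lambda>p. snd p = v) (zip l g))"

lemma entries_at_Nil [simp]: "entries_at v [] g = []"
  by (simp add: entries_at_def)

lemma entries_at_Cons [simp]:
  "entries_at v (m # l) (w # g) = (if w = v then m # entries_at v l g else entries_at v l g)"
  by (simp add: entries_at_def)

text \<open>General Leibniz rule: \<open>g\<close> records the factor each derivative in \<open>l\<close> falls on.\<close>

lemma pds_prod:
  fixes F :: "'v \<Rightarrow> 'n::finite sym"
  assumes V: "finite V" and F: "\<And>v. v \<in> V \<Longrightarrow> smooth_sym (F v)"
  shows "pds l (\<lambda>z. \<Prod>v\<in>V. F v z)
    = (\<lambda>z. \<Sum>g\<in>lists_of V (length l). \<Prod>v\<in>V. pds (entries_at v l g) (F v) z)"
proof (induction l)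
  case (Cons m l)
  let ?H = "\<lambda>g v. pds (entries_at v l g) (F v)"
  have "pds (m # l) (\<lambda>z. \<Prod>v\<in>V. F v z) = pd m (\<lambda>z. \<Sum>g\<in>lists_of V (length l). \<Prod>v\<in>V. ?H g v z)"
    using Cons.IH by simp
  also have "\<dots> = (\<lambda>z. \<Sum>g\<in>lists_of V (length l). pd m (\<lambda>z. \<Prod>v\<in>V. ?H g v z) z)"
    using pds_sum[of _ "\<lambda>g z. \<Prod>v\<in>V. ?H g v z" "[m]"] V F
    by (simp add: finite_lists_of smooth_sym_prod smooth_sym_pds)
  also have "\<dots> = (\<lambda>z. \<Sum>g\<in>lists_of V (length l). \<Sum>w\<in>V. \<Prod>v\<in>V.
       pds (entries_at v (m # l) (w # g)) (F v) z)"
    using V F by (intro ext sum.cong refl) (auto simp: pd_prod smooth_sym_differentiable smooth_sym_pds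
        intro!: sum.cong prod.cong)
  also have "\<dots> = (\<lambda>z. \<Sum>g\<in>lists_of V (length (m # l)). \<Prod>v\<in>V. pds (entries_at v (m # l) g) (F v) z)"
    by (simp add: sum_lists_of_Suc sum.swap[of _ V])
  finally show ?case .
qed simp

section \<open>Edge lists\<close>

text \<open>A labeled graph with \<open>K\<close> edges, together with the index pairs \<open>(\<mu>\<^sub>e, \<nu>\<^sub>e)\<close>
  summed over in \<^const>\<open>lambda_graph\<close>, is encoded as the list
  \<open>[(s 1, \<mu>\<^sub>1, \<nu>\<^sub>1), \<dots>, (s K, \<mu>\<^sub>K, \<nu>\<^sub>K)]\<close>.\<close>

definition edges :: "nat \<Rightarrow> nat set set" where
  "edges V = {P. P \<subseteq> {1..V} \<and> card P = 2}"

definition edges_into :: "nat \<Rightarrow> nat set set" where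
  "edges_into v = {P \<in> edges v. v \<in> P}"

definition J_prod :: "(('a + 'a) \<times> ('a + 'a)) list \<Rightarrow> complex" where
  "J_prod ps = prod_list (map (\<lambda>(m, m'). Jm m m') ps)"

definition vertex_idxs :: "nat \<Rightarrow> (nat set \<times> 'a \<times> 'a) list \<Rightarrow> 'a list" where
  "vertex_idxs v x = concat (map (\<lambda>(P, m, m').
      (if Min P = v then [m] else []) @ (if Max P = v then [m'] else [])) x)"

definition edge_term ::
    "nat \<Rightarrow> (nat \<Rightarrow> 'n::finite sym) \<Rightarrow> (nat set \<times> ('n + 'n) \<times> ('n + 'n)) list \<Rightarrow> 'n sym" where
  "edge_term V C x = (\<lambda>z. J_prod (map snd x) * (\<Prod>v\<in>{1..V}. pds (vertex_idxs v x) (C v) z))"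

definition edge_sum :: "nat \<Rightarrow> (nat \<Rightarrow> 'n::finite sym) \<Rightarrow> nat \<Rightarrow> 'n sym" where
  "edge_sum V C K = (\<lambda>z. \<Sum>x\<in>lists_of (edges V \<times> UNIV) K. edge_term V C x z)"

lemma finite_edges: "finite (edges V)"
  unfolding edges_def by (rule finite_subset[of _ "Pow {1..V}"]) auto

lemma edges_1: "edges (Suc 0) = {}"
  unfolding edges_def by (auto simp: subset_singleton_iff)

lemma edges_Suc: "edges (Suc n) = edges n \<union> edges_into (Suc n)"
  unfolding edges_into_def edges_def by (auto simp: atLeastAtMostSuc_conv)

lemma edges_disjoint_edges_into: "edges n \<inter> edges_into (Suc n) = {}"
  unfolding edges_into_def edges_def by auto

lemma J_prod_append [simp]: "J_prod (ps @ qs) = J_prod ps * J_prod qs"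
  by (simp add: J_prod_def)

lemma vertex_idxs_Nil [simp]: "vertex_idxs v [] = []"
  by (simp add: vertex_idxs_def)

lemma vertex_idxs_append [simp]: "vertex_idxs v (x @ y) = vertex_idxs v x @ vertex_idxs v y"
  by (simp add: vertex_idxs_def)

lemma smooth_sym_edge_term:
  "(\<And>v. v \<in> {1..V} \<Longrightarrow> smooth_sym (C v)) \<Longrightarrow> smooth_sym (edge_term V C x)"
  unfolding edge_term_def
  by (intro smooth_sym_mult[OF smooth_sym_const] smooth_sym_prod smooth_sym_pds finite_atLeastAtMost) simp

lemma smooth_sym_edge_sum:
  "(\<And>v. v \<in> {1..V} \<Longrightarrow> smooth_sym (C v)) \<Longrightarrow> smooth_sym (edge_sum V C K)"
  unfolding edge_sum_def
  by (intro smooth_sym_sum smooth_sym_edge_term finite_lists_of finite_SigmaI finite_edges) auto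

lemma edge_term_perm:
  assumes "\<And>v. v \<in> {1..V} \<Longrightarrow> smooth_sym (C v)" and "mset x = mset y"
  shows "edge_term V C x = edge_term V C y"
proof -
  have "J_prod (map snd x) = J_prod (map snd y)"
    unfolding J_prod_def prod_mset_prod_list[symmetric] mset_map using assms(2) by simp
  moreover have "pds (vertex_idxs v x) (C v) = pds (vertex_idxs v y) (C v)" if "v \<in> {1..V}" for v
  proof (rule pds_perm[OF assms(1)[OF that]])
    have mset_concat_map: "mset (concat (map h xs)) = sum_mset (image_mset (\<lambda>a. mset (h a)) (mset xs))"
      for h :: "_ \<Rightarrow> _ list" and xs
      by (induction xs) auto
    show "mset (vertex_idxs v x) = mset (vertex_idxs v y)"
      unfolding vertex_idxs_def by (simp only: mset_concat_map assms(2))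
  qed
  ultimately show ?thesis
    unfolding edge_term_def by (metis (no_types, lifting) prod.cong)
qed

lemma sum_lambda_graph_eq_edge_sum:
  fixes C :: "nat \<Rightarrow> 'n::finite sym"
  shows "(\<Sum>s\<in>graphs V K. lambda_graph V K s C z) = edge_sum V C K z"
proof -
  let ?l = "[1..<K+1]"
  let ?T = "\<lambda>x. edge_term V C x z"
  have lambda_graph_eq: "lambda_graph V K s C z
     = (\<Sum>mu\<in>{1..K} \<rightarrow>\<^sub>E UNIV. \<Sum>nu\<in>{1..K} \<rightarrow>\<^sub>E UNIV. ?T (zip (map s ?l) (map (\<lambda>e. (mu e, nu e)) ?l)))"
    for s
  proof -
    have "vertex_indices K s mu nu v = vertex_idxs v (zip (map s ?l) (map (\<lambda>e. (mu e, nu e)) ?l))"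
      for mu nu :: "nat \<Rightarrow> 'n + 'n" and v
      unfolding vertex_indices_def vertex_idxs_def by (simp add: zip_map_map zip_same_conv_map o_def)
    then show ?thesis
      unfolding lambda_graph_def edge_term_def J_prod_def prod_atLeastAtMost_eq_prod_list
      by (simp add: zip_map_map zip_same_conv_map o_def del: upt_Suc)
  qed
  have "(\<Sum>s\<in>graphs V K. lambda_graph V K s C z)
      = (\<Sum>s\<in>{1..K} \<rightarrow>\<^sub>E edges V. \<Sum>q\<in>lists_of UNIV K. ?T (zip (map s ?l) q))"
    unfolding graphs_def lambda_graph_eq edges_def[symmetric]
    by (intro sum.cong refl sum_PiE_PiE_eq_sum_lists_of[of _ _ UNIV UNIV, unfolded UNIV_Times_UNIV])
  also have "\<dots> = (\<Sum>xs\<in>lists_of (edges V) K. \<Sum>q\<in>lists_of UNIV K. ?T (zip xs q))"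
    by (rule sum_PiE_eq_sum_lists_of)
  also have "\<dots> = edge_sum V C K z"
    unfolding edge_sum_def by (rule sum_lists_of_zip)
  finally show ?thesis .
qed

section \<open>Adding a vertex\<close>

definition attach_edge :: "nat \<Rightarrow> nat \<times> 'm \<Rightarrow> nat set \<times> 'm" where
  "attach_edge w = (\<lambda>(v, mm). ({v, w}, mm))"

lemma bij_betw_attach_edge:
  "bij_betw (attach_edge (Suc n)) ({1..n} \<times> UNIV) (edges_into (Suc n) \<times> UNIV)"
proof (rule bij_betwI')
  fix x y :: "nat \<times> 'm"
  assume "x \<in> {1..n} \<times> UNIV" "y \<in> {1..n} \<times> UNIV"
  then show "(attach_edge (Suc n) x = attach_edge (Suc n) y) = (x = y)"
    unfolding attach_edge_def by (cases x, cases y) (auto simp: doubleton_eq_iff)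
next
  fix x :: "nat \<times> 'm"
  assume "x \<in> {1..n} \<times> UNIV"
  then show "attach_edge (Suc n) x \<in> edges_into (Suc n) \<times> UNIV"
    unfolding attach_edge_def edges_into_def edges_def by (cases x) auto
next
  fix y :: "nat set \<times> 'm"
  assume y: "y \<in> edges_into (Suc n) \<times> UNIV"
  obtain P mm where y_eq: "y = (P, mm)" by (cases y)
  have P: "P \<subseteq> {1..Suc n}" "card P = 2" "Suc n \<in> P"
    using y y_eq unfolding edges_into_def edges_def by auto
  then obtain v where v: "P = {v, Suc n}" "v \<noteq> Suc n"
    by (metis card_2_iff insert_commute insertE singletonD)
  with P(1) have "v \<in> {1..n}" by auto
  with v y_eq show "\<exists>x\<in>{1..n} \<times> UNIV. y = attach_edge (Suc n) x"
    unfolding attach_edge_def by (intro bexI[of _ "(v, mm)"]) auto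
qed

lemma map_snd_attach_edge:
  "length g = length ps \<Longrightarrow> map snd (map (attach_edge w) (zip g ps)) = ps"
  by (induction g ps rule: list_induct2) (auto simp: attach_edge_def)

lemma vertex_idxs_attach_edge_below:
  "length g = length ps \<Longrightarrow> set g \<subseteq> {1..n} \<Longrightarrow> v \<le> n \<Longrightarrow>
    vertex_idxs v (map (attach_edge (Suc n)) (zip g ps)) = entries_at v (map fst ps) g"
proof (induction g ps rule: list_induct2)
  case (Cons u g p ps)
  then have "Min {u, Suc n} = u" "Max {u, Suc n} = Suc n" by auto
  with Cons show ?case by (cases p) (auto simp: vertex_idxs_def attach_edge_def)
qed simp

lemma vertex_idxs_attach_edge_top:
  "length g = length ps \<Longrightarrow> set g \<subseteq> {1..n} \<Longrightarrow>
    vertex_idxs (Suc n) (map (attach_edge (Suc n)) (zip g ps)) = map snd ps"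
proof (induction g ps rule: list_induct2)
  case (Cons u g p ps)
  then have "Min {u, Suc n} = u" "Max {u, Suc n} = Suc n" by auto
  with Cons show ?case by (cases p) (auto simp: vertex_idxs_def attach_edge_def)
qed simp

lemma vertex_idxs_outside_edges:
  "set y \<subseteq> edges n \<times> UNIV \<Longrightarrow> vertex_idxs (Suc n) y = []"
proof (induction y)
  case (Cons e y)
  obtain P mm where e: "e = (P, mm)" by (cases e)
  with Cons.prems have "P \<subseteq> {1..n}" "P \<noteq> {}" "finite P"
    unfolding edges_def by (auto intro: card_ge_0_finite)
  then have "Min P \<noteq> Suc n" "Max P \<noteq> Suc n"
    using Min_in Max_in by fastforce+
  with Cons e show ?case by (cases mm) (auto simp: vertex_idxs_def)
qed simp

lemma edge_term_append_attached:
  fixes C :: "nat \<Rightarrow> 'n::finite sym"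
  assumes C: "\<And>v. v \<in> {1..Suc n} \<Longrightarrow> smooth_sym (C v)"
    and y: "set y \<subseteq> edges n \<times> UNIV" and g: "set g \<subseteq> {1..n}" and len: "length g = length ps"
  shows "edge_term (Suc n) C (y @ map (attach_edge (Suc n)) (zip g ps)) z
    = J_prod ps * (J_prod (map snd y) * (\<Prod>v\<in>{1..n}.
        pds (entries_at v (map fst ps) g @ vertex_idxs v y) (C v) z)) * pds (map snd ps) (C (Suc n)) z"
proof -
  have "pds (vertex_idxs v (y @ map (attach_edge (Suc n)) (zip g ps))) (C v)
      = pds (entries_at v (map fst ps) g @ vertex_idxs v y) (C v)" if "v \<in> {1..n}" for v
    using that g len C by (auto simp: vertex_idxs_attach_edge_below intro!: pds_perm)
  moreover have "vertex_idxs (Suc n) (y @ map (attach_edge (Suc n)) (zip g ps)) = map snd ps"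
    using y g len by (simp add: vertex_idxs_outside_edges vertex_idxs_attach_edge_top)
  ultimately have "(\<Prod>v\<in>{1..Suc n}. pds (vertex_idxs v (y @ map (attach_edge (Suc n)) (zip g ps))) (C v) z)
     = (\<Prod>v\<in>{1..n}. pds (entries_at v (map fst ps) g @ vertex_idxs v y) (C v) z)
       * pds (map snd ps) (C (Suc n)) z"
    by simp
  then show ?thesis
    unfolding edge_term_def map_append map_snd_attach_edge[OF len] by (simp add: ac_simps)
qed

lemma bracket_eq_sum_lists_of:
  "bracket k G D z
    = (\<Sum>ps\<in>lists_of UNIV k. J_prod ps * pds (map fst ps) G z * pds (map snd ps) D z)"
proof -
  have J_eq: "(\<Prod>e\<in>{1..k}. Jm (mu e) (nu e)) = J_prod (map (\<lambda>e. (mu e, nu e)) [1..<k+1])"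
    for mu nu
    unfolding prod_atLeastAtMost_eq_prod_list J_prod_def by (simp add: o_def del: upt_Suc)
  show ?thesis
    unfolding bracket_def J_eq
    using sum_PiE_PiE_eq_sum_lists_of[where K = k and A = UNIV and B = UNIV
        and F = "\<lambda>ps. J_prod ps * pds (map fst ps) G z * pds (map snd ps) D z", unfolded UNIV_Times_UNIV]
    by (simp add: o_def del: upt_Suc)
qed

lemma pds_edge_sum:
  fixes C :: "nat \<Rightarrow> 'n::finite sym"
  assumes C: "\<And>v. v \<in> {1..n} \<Longrightarrow> smooth_sym (C v)"
  shows "pds l (edge_sum n C j) z = (\<Sum>y\<in>lists_of (edges n \<times> UNIV) j. J_prod (map snd y) *
      (\<Sum>g\<in>lists_of {1..n} (length l). \<Prod>v\<in>{1..n}. pds (entries_at v l g @ vertex_idxs v y) (C v) z))"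
proof -
  have "pds l (edge_term n C y) z = J_prod (map snd y) *
      (\<Sum>g\<in>lists_of {1..n} (length l). \<Prod>v\<in>{1..n}. pds (entries_at v l g @ vertex_idxs v y) (C v) z)"
    for y
  proof -
    have "pds l (edge_term n C y)
        = (\<lambda>z. J_prod (map snd y) * pds l (\<lambda>z. \<Prod>v\<in>{1..n}. pds (vertex_idxs v y) (C v) z) z)"
      unfolding edge_term_def using C by (intro pds_cmult smooth_sym_prod smooth_sym_pds) auto
    also have "\<dots> = (\<lambda>z. J_prod (map snd y) * (\<Sum>g\<in>lists_of {1..n} (length l).
        \<Prod>v\<in>{1..n}. pds (entries_at v l g) (pds (vertex_idxs v y) (C v)) z))"
      using C by (subst pds_prod) (auto intro: smooth_sym_pds)
    finally show ?thesis by (simp add: pds_append)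
  qed
  moreover have "pds l (edge_sum n C j) = (\<lambda>z. \<Sum>y\<in>lists_of (edges n \<times> UNIV) j. pds l (edge_term n C y) z)"
    unfolding edge_sum_def using C
    by (intro pds_sum smooth_sym_edge_term finite_lists_of finite_SigmaI finite_edges) auto
  ultimately show ?thesis by simp
qed

lemma bracket_edge_sum:
  fixes C :: "nat \<Rightarrow> 'n::finite sym"
  assumes C: "\<And>v. v \<in> {1..Suc n} \<Longrightarrow> smooth_sym (C v)"
  shows "bracket k (edge_sum n C j) (C (Suc n)) z
    = (\<Sum>y\<in>lists_of (edges n \<times> UNIV) j. \<Sum>w\<in>lists_of (edges_into (Suc n) \<times> UNIV) k.
        edge_term (Suc n) C (y @ w) z)"
proof -
  let ?Y = "lists_of (edges n \<times> (UNIV :: (('n + 'n) \<times> ('n + 'n)) set)) j"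
  let ?G = "lists_of {1..n} k"
  let ?P = "lists_of (UNIV :: (('n + 'n) \<times> ('n + 'n)) set) k"
  let ?T = "\<lambda>y w. edge_term (Suc n) C (y @ w) z"
  let ?\<Pi> = "\<lambda>ps y g. \<Prod>v\<in>{1..n}. pds (entries_at v (map fst ps) g @ vertex_idxs v y) (C v) z"
  have "bracket k (edge_sum n C j) (C (Suc n)) z
      = (\<Sum>ps\<in>?P. J_prod ps * pds (map fst ps) (edge_sum n C j) z * pds (map snd ps) (C (Suc n)) z)"
    by (rule bracket_eq_sum_lists_of)
  also have "\<dots> = (\<Sum>ps\<in>?P. \<Sum>y\<in>?Y. \<Sum>g\<in>?G. ?T y (map (attach_edge (Suc n)) (zip g ps)))"
  proof (intro sum.cong refl)
    fix ps assume "ps \<in> ?P"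
    then have len: "length ps = k" by (simp add: lists_of_def)
    have "pds (map fst ps) (edge_sum n C j) z = (\<Sum>y\<in>?Y. J_prod (map snd y) * (\<Sum>g\<in>?G. ?\<Pi> ps y g))"
      using pds_edge_sum[of n C "map fst ps"] C len by simp
    then have "J_prod ps * pds (map fst ps) (edge_sum n C j) z * pds (map snd ps) (C (Suc n)) z
        = (\<Sum>y\<in>?Y. \<Sum>g\<in>?G. J_prod ps * (J_prod (map snd y) * ?\<Pi> ps y g) * pds (map snd ps) (C (Suc n)) z)"
      by (simp add: sum_distrib_left sum_distrib_right)
    also have "\<dots> = (\<Sum>y\<in>?Y. \<Sum>g\<in>?G. ?T y (map (attach_edge (Suc n)) (zip g ps)))"
      using C len by (intro sum.cong refl, subst edge_term_append_attached) (auto simp: lists_of_def)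
    finally show "J_prod ps * pds (map fst ps) (edge_sum n C j) z * pds (map snd ps) (C (Suc n)) z = \<dots>" .
  qed
  also have "\<dots> = (\<Sum>y\<in>?Y. \<Sum>g\<in>?G. \<Sum>ps\<in>?P. ?T y (map (attach_edge (Suc n)) (zip g ps)))"
    by (subst sum.swap) (simp only: sum.swap[of _ ?P])
  also have "\<dots> = (\<Sum>y\<in>?Y. \<Sum>q\<in>lists_of ({1..n} \<times> UNIV) k. ?T y (map (attach_edge (Suc n)) q))"
    by (intro sum.cong refl sum_lists_of_zip)
  also have "\<dots> = (\<Sum>y\<in>?Y. \<Sum>w\<in>lists_of (edges_into (Suc n) \<times> UNIV) k. ?T y w)"
    by (intro sum.cong refl sum_lists_of_reindex_bij[OF bij_betw_attach_edge, symmetric])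
  finally show ?thesis .
qed

lemma edge_sum_Suc:
  fixes C :: "nat \<Rightarrow> 'n::finite sym"
  assumes C: "\<And>v. v \<in> {1..Suc n} \<Longrightarrow> smooth_sym (C v)"
  shows "edge_sum (Suc n) C K z = (\<Sum>k\<le>K. of_nat (K choose k) *
      (\<Sum>y\<in>lists_of (edges n \<times> UNIV) (K - k). \<Sum>w\<in>lists_of (edges_into (Suc n) \<times> UNIV) k.
        edge_term (Suc n) C (y @ w) z))"
proof -
  have perm: "edge_term (Suc n) C xs z = edge_term (Suc n) C ys z" if "mset xs = mset ys" for xs ys
    using edge_term_perm[where V = "Suc n", OF C that] by simp
  have "edge_sum (Suc n) C K z
      = (\<Sum>xs\<in>lists_of (edges n \<times> UNIV \<union> edges_into (Suc n) \<times> UNIV) K. edge_term (Suc n) C xs z)"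
    unfolding edge_sum_def edges_Suc Sigma_Un_distrib1 ..
  also have "\<dots> = (\<Sum>k\<le>K. of_nat (K choose k) *
      (\<Sum>y\<in>lists_of (edges n \<times> UNIV) (K - k). \<Sum>w\<in>lists_of (edges_into (Suc n) \<times> UNIV) k.
        edge_term (Suc n) C (y @ w) z))"
    by (rule sum_lists_of_Un_binomial[OF _ _ _ perm])
      (use edges_disjoint_edges_into[of n] in \<open>auto simp: finite_edges edges_into_def\<close>)
  finally show ?thesis .
qed

definition moyal_coeff :: "nat \<Rightarrow> complex" where
  "moyal_coeff k = (\<i> / 2) ^ k / of_nat (fact k)"

lemma moyal_coeff_mult:
  assumes "k \<le> K"
  shows "moyal_coeff k * moyal_coeff (K - k) = moyal_coeff K * of_nat (K choose k)"
proof -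
  have "(\<i> / 2) ^ K = (\<i> / 2) ^ k * ((\<i> / 2) ^ (K - k) :: complex)"
    using assms by (simp add: power_add[symmetric])
  then show ?thesis
    unfolding moyal_coeff_def binomial_fact[OF assms] of_nat_fact by (simp add: field_simps)
qed

lemma bracket_zero_right: "bracket k C (\<lambda>z. 0) z = 0"
  unfolding bracket_def by simp

lemma bracket_cmult_left: "smooth_sym C \<Longrightarrow> bracket k (\<lambda>z. c * C z) D z = c * bracket k C D z"
  unfolding bracket_def by (simp add: pds_cmult sum_distrib_left ac_simps)

lemma moyal_const_series_right:
  "moyal A (const_series D) K z = (\<Sum>k\<le>K. moyal_coeff k * bracket k (A (K - k)) D z)"
proof -
  have "(\<Sum>a\<le>K - k. moyal_coeff k * bracket k (A a) (const_series D (K - k - a)) z)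
      = moyal_coeff k * bracket k (A (K - k)) D z" for k
    by (subst sum.remove[of _ "K - k"])
       (auto simp: const_series_def bracket_zero_right split: if_split_asm intro!: sum.neutral)
  then show ?thesis
    unfolding moyal_def moyal_coeff_def by simp
qed

lemma moyal_list_eq_edge_sum:
  fixes C :: "nat \<Rightarrow> 'n::finite sym"
  assumes "\<And>v. v \<in> {1..Suc n} \<Longrightarrow> smooth_sym (C v)"
  shows "moyal_list (Suc n) C K z = moyal_coeff K * edge_sum (Suc n) C K z"
  using assms
proof (induction n arbitrary: K z)
  case 0
  show ?case
    by (cases K) (simp_all add: const_series_def moyal_coeff_def edge_sum_def edge_term_def
        J_prod_def lists_of_Suc edges_1)
next
  case (Suc n)
  let ?D = "C (Suc (Suc n))"
  have C: "\<And>v. v \<in> {1..Suc n} \<Longrightarrow> smooth_sym (C v)"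
    using Suc.prems by simp
  have smooth: "smooth_sym (edge_sum (Suc n) C a)" for a
    using C by (rule smooth_sym_edge_sum)
  have IH: "moyal_list (Suc n) C a = (\<lambda>z. moyal_coeff a * edge_sum (Suc n) C a z)" for a
    using Suc.IH[OF C] by (simp add: fun_eq_iff)
  have "moyal_list (Suc (Suc n)) C K z
      = (\<Sum>k\<le>K. moyal_coeff k * bracket k (moyal_list (Suc n) C (K - k)) ?D z)"
    by (simp add: moyal_const_series_right)
  also have "\<dots> = (\<Sum>k\<le>K. moyal_coeff k * moyal_coeff (K - k) * bracket k (edge_sum (Suc n) C (K - k)) ?D z)"
    unfolding IH by (simp add: bracket_cmult_left[OF smooth] mult.assoc)
  also have "\<dots> = (\<Sum>k\<le>K. moyal_coeff K * (of_nat (K choose k) * bracket k (edge_sum (Suc n) C (K - k)) ?D z))"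
    by (intro sum.cong refl) (simp add: moyal_coeff_mult)
  also have "\<dots> = moyal_coeff K * edge_sum (Suc (Suc n)) C K z"
  proof -
    let ?X = "\<lambda>j k. \<Sum>y\<in>lists_of (edges (Suc n) \<times> UNIV) j.
      \<Sum>w\<in>lists_of (edges_into (Suc (Suc n)) \<times> UNIV) k. edge_term (Suc (Suc n)) C (y @ w) z"
    have "bracket k (edge_sum (Suc n) C j) ?D z = ?X j k" for k j
      by (rule bracket_edge_sum) (fact Suc.prems)
    moreover have "edge_sum (Suc (Suc n)) C K z = (\<Sum>k\<le>K. of_nat (K choose k) * ?X (K - k) k)"
      by (rule edge_sum_Suc) (fact Suc.prems)
    ultimately show ?thesis
      by (simp only: sum_distrib_left)
  qed
  finally show ?case .
qed

theorem lemma1: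
  fixes C :: "nat \<Rightarrow> real ^ ('n::finite + 'n) \<Rightarrow> complex" and n :: nat
  assumes "n \<ge> 1"
    and "\<And>j. j \<in> {1..n} \<Longrightarrow> smooth_sym (C j)"
  shows "\<forall>k z. moyal_list n C k z
           = (\<i> / 2) ^ k / of_nat (fact k) * (\<Sum>s\<in>graphs n k. lambda_graph n k s C z)"
proof -
  obtain m where "n = Suc m" using assms(1) by (cases n) auto
  then show ?thesis
    using moyal_list_eq_edge_sum[of m C] assms(2)
    by (simp add: sum_lambda_graph_eq_edge_sum moyal_coeff_def)
qed

end
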